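(* Let $R$ be $\mathbb{Z}$ or $\mathbb{Z}/m\mathbb{Z}$ with $m\ge2$, let $\Lambda$ be a free abelian group with basis $x_1,\ldots,x_n$, and let $\vec r=(r_1,\ldots,r_n)$ be an $n$-tuple in $R[\Lambda]$ satisfying the flatness condition. Then every syzygy of $\vec r$ is trivial.
   Context: $R[\Lambda]$ is identified with $R[x_1^{\pm1},\ldots,x_n^{\pm1}]$; $\Lambda_i=\langle x_1,\ldots,x_i\rangle$. A polynomial $p\in R[\Lambda_i]$ is a divisor with respect to $x_i$ if, writing $p=p_kx_i^k+\cdots+p_mx_i^m$ with $p_j\in R[\Lambda_{i-1}]$ and $p_k\ne0$, $p_k$ is a monic monomial in $x_1,\ldots,x_{i-1}$. $\vec r$ satisfies the flatness condition if $r_i\in R[\Lambda_i]$ and $r_i$ is a divisor with respect to $x_i$ for all $i$. A syzygy of $\vec r$ is $(f_1,\ldots,f_n)\in R[\Lambda]^n$ with $\sum_if_ir_i=0$; it is trivial if it lies in the $R[\Lambda]$-submodule generated by the vectors $S_{ij}$ ($i\ne j$) having $r_j$ in position $i$, $-r_i$ in position $j$, and $0$ elsewhere. *)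

theory Defs
  imports "HOL-Library.Poly_Mapping"
begin

text \<open>Laurent polynomials R[x_1^{+-1},...] : finitely supported maps from
  exponent vectors (nat =>0 int, variable j = x_j) to coefficients.
  The group ring R[Lambda] with Lambda = <x_1..x_n> is the subset of those
  whose exponents only involve variables 1..n.\<close>

type_synonym 'a lpoly = "(nat \<Rightarrow>\<^sub>0 int) \<Rightarrow>\<^sub>0 'a"

definition lpoly_in :: "nat \<Rightarrow> 'a::zero lpoly \<Rightarrow> bool" where
  "lpoly_in i p \<longleftrightarrow> (\<forall>e\<in>Poly_Mapping.keys p. \<forall>j\<in>Poly_Mapping.keys e. 1 \<le> j \<and> j \<le> i)"

definition lmonom :: "'a::zero \<Rightarrow> (nat \<Rightarrow>\<^sub>0 int) \<Rightarrow> 'a lpoly" where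
  "lmonom c e = Poly_Mapping.single e c"

text \<open>Coefficient p_k of x_i^k when p is written as sum_k p_k x_i^k, with p_k
  not involving x_i.\<close>
definition xcoeff :: "nat \<Rightarrow> 'a::comm_ring_1 lpoly \<Rightarrow> int \<Rightarrow> 'a lpoly" where
  "xcoeff i p k = (\<Sum>e\<in>{e\<in>Poly_Mapping.keys p. Poly_Mapping.lookup e i = k}.
       lmonom (Poly_Mapping.lookup p e) (e - Poly_Mapping.single i k))"

definition divisor_wrt :: "nat \<Rightarrow> 'a::comm_ring_1 lpoly \<Rightarrow> bool" where
  "divisor_wrt i p \<longleftrightarrow> lpoly_in i p \<and>
     (\<exists>k. xcoeff i p k \<noteq> 0 \<and> (\<forall>j<k. xcoeff i p j = 0) \<and>
          (\<exists>e. (\<forall>j\<in>Poly_Mapping.keys e. 1 \<le> j \<and> j < i) \<and> xcoeff i p k = lmonom 1 e))"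

text \<open>Flatness condition for r_1,...,r_n (tuples are maps nat => _, indices 1..n).\<close>
definition flat :: "nat \<Rightarrow> (nat \<Rightarrow> 'a::comm_ring_1 lpoly) \<Rightarrow> bool" where
  "flat n r \<longleftrightarrow> (\<forall>i\<in>{1..n}. lpoly_in i (r i) \<and> divisor_wrt i (r i))"

definition syzygy :: "nat \<Rightarrow> (nat \<Rightarrow> 'a::comm_ring_1 lpoly) \<Rightarrow> (nat \<Rightarrow> 'a lpoly) \<Rightarrow> bool" where
  "syzygy n r f \<longleftrightarrow> (\<forall>i\<in>{1..n}. lpoly_in n (f i)) \<and> (\<Sum>i=1..n. f i * r i) = 0"

text \<open>f lies in the R[Lambda]-submodule generated by the S_ij (i ~= j):
  f = sum_{i~=j} c_ij S_ij, whose k-th component is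
  sum_{j~=k} c_kj r_j - sum_{i~=k} c_ik r_i.\<close>
definition trivial_syzygy :: "nat \<Rightarrow> (nat \<Rightarrow> 'a::comm_ring_1 lpoly) \<Rightarrow> (nat \<Rightarrow> 'a lpoly) \<Rightarrow> bool" where
  "trivial_syzygy n r f \<longleftrightarrow> (\<exists>c :: nat \<Rightarrow> nat \<Rightarrow> 'a lpoly.
     (\<forall>i j. lpoly_in n (c i j)) \<and>
     (\<forall>k\<in>{1..n}. f k = (\<Sum>j\<in>{1..n}-{k}. c k j * r j) - (\<Sum>i\<in>{1..n}-{k}. c i k * r i)))"

end

theory Submission
  imports Defs
begin

text \<open>Induct on n. Since r_1, ..., r_n do not involve x_(n+1), the ideal J they generate
  is graded by the x_(n+1)-degree; as the lowest x_(n+1)-part of r_(n+1) is a unit monomial,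
  r_(n+1) is a nonzerodivisor modulo J. A syzygy f therefore has f_(n+1) in J, and subtracting
  Koszul syzygies S_(n+1,j) reduces it to a syzygy of r_1, ..., r_n. Finally the coefficients
  are projected onto R[Lambda_n], which commutes with multiplication by the r_j.
  Nothing about R beyond commutativity is used.\<close>

definition restrict_keys :: "('b \<Rightarrow> bool) \<Rightarrow> ('b \<Rightarrow>\<^sub>0 'a::zero) \<Rightarrow> 'b \<Rightarrow>\<^sub>0 'a" where
  "restrict_keys Q p = Poly_Mapping.mapp (\<lambda>e c. if Q e then c else 0) p"

abbreviation x_slice :: "nat \<Rightarrow> int \<Rightarrow> ('a::zero) lpoly \<Rightarrow> 'a lpoly" where
  "x_slice i k \<equiv> restrict_keys (\<lambda>e. Poly_Mapping.lookup e i = k)"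

lemma lookup_restrict_keys [simp]:
  "Poly_Mapping.lookup (restrict_keys Q p) e = (if Q e then Poly_Mapping.lookup p e else 0)"
  unfolding restrict_keys_def by (auto simp: lookup_mapp in_keys_iff when_def)

lemma keys_restrict_keys: "Poly_Mapping.keys (restrict_keys Q p) = {e \<in> Poly_Mapping.keys p. Q e}"
  by (auto simp: in_keys_iff split: if_splits)

lemma restrict_keys_add: "restrict_keys Q (p + q) = restrict_keys Q p + restrict_keys Q q"
  by (rule poly_mapping_eqI) (simp add: lookup_add)

lemma restrict_keys_diff: "restrict_keys Q (p - q) = restrict_keys Q p - restrict_keys Q q"
  by (rule poly_mapping_eqI) (simp add: lookup_minus)

lemma restrict_keys_sum: "restrict_keys Q (sum h A) = (\<Sum>x\<in>A. restrict_keys Q (h x))"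
  by (rule poly_mapping_eqI) (simp add: lookup_sum)

lemma restrict_keys_eq_self: "\<forall>e\<in>Poly_Mapping.keys p. Q e \<Longrightarrow> restrict_keys Q p = p"
  by (rule poly_mapping_eqI) (auto simp: in_keys_iff)

lemma restrict_keys_eq_zero: "\<forall>e\<in>Poly_Mapping.keys p. \<not> Q e \<Longrightarrow> restrict_keys Q p = 0"
  by (rule poly_mapping_eqI) (auto simp: in_keys_iff)

lemma restrict_keys_split: "p = restrict_keys Q p + restrict_keys (\<lambda>e. \<not> Q e) p"
  by (rule poly_mapping_eqI) (simp add: lookup_add)

lemma restrict_keys_mult_right:
  fixes p q :: "('b::monoid_add \<Rightarrow>\<^sub>0 'a::semiring_0)"
  assumes Q_shift: "\<forall>v\<in>Poly_Mapping.keys q. \<forall>u. Q (u + v) = Q u"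
  shows "restrict_keys Q (p * q) = restrict_keys Q p * q"
proof -
  let ?P = "restrict_keys Q p" and ?P' = "restrict_keys (\<lambda>e. \<not> Q e) p"
  have P_keys: "\<forall>e\<in>Poly_Mapping.keys (?P * q). Q e"
  proof
    fix e assume "e \<in> Poly_Mapping.keys (?P * q)"
    then obtain u v where "e = u + v" "u \<in> Poly_Mapping.keys ?P" "v \<in> Poly_Mapping.keys q"
      using keys_mult by blast
    then show "Q e" using Q_shift by (metis (mono_tags, lifting) keys_restrict_keys mem_Collect_eq)
  qed
  have P'_keys: "\<forall>e\<in>Poly_Mapping.keys (?P' * q). \<not> Q e"
  proof
    fix e assume "e \<in> Poly_Mapping.keys (?P' * q)"
    then obtain u v where "e = u + v" "u \<in> Poly_Mapping.keys ?P'" "v \<in> Poly_Mapping.keys q"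
      using keys_mult by blast
    then show "\<not> Q e" using Q_shift by (metis (mono_tags, lifting) keys_restrict_keys mem_Collect_eq)
  qed
  have "p * q = ?P * q + ?P' * q"
    by (subst restrict_keys_split[of p Q]) (rule distrib_right)
  then have "restrict_keys Q (p * q) = restrict_keys Q (?P * q) + restrict_keys Q (?P' * q)"
    by (metis restrict_keys_add)
  also have "\<dots> = ?P * q"
    unfolding restrict_keys_eq_self[OF P_keys] restrict_keys_eq_zero[OF P'_keys] by simp
  finally show ?thesis .
qed

lemma x_slice_split:
  assumes "\<forall>e\<in>Poly_Mapping.keys p. k \<le> Poly_Mapping.lookup e i"
  shows "p = x_slice i k p + restrict_keys (\<lambda>e. k < Poly_Mapping.lookup e i) p"
proof (rule poly_mapping_eqI)
  fix e
  show "Poly_Mapping.lookup p e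
      = Poly_Mapping.lookup (x_slice i k p + restrict_keys (\<lambda>e. k < Poly_Mapping.lookup e i) p) e"
  proof (cases "e \<in> Poly_Mapping.keys p")
    case True
    then have "k \<le> Poly_Mapping.lookup e i" using assms by blast
    then show ?thesis by (auto simp: lookup_add)
  next
    case False
    then show ?thesis by (simp add: lookup_add in_keys_iff)
  qed
qed

lemma keys_mult_lookupE:
  assumes "e \<in> Poly_Mapping.keys (p * q)"
  obtains u v where "u \<in> Poly_Mapping.keys p" "v \<in> Poly_Mapping.keys q"
    "Poly_Mapping.lookup e i = Poly_Mapping.lookup u i + Poly_Mapping.lookup v i"
  using assms keys_mult[of p q] by (force simp: lookup_add)

lemma x_slice_mult_lowest:
  fixes p q :: "'a::semiring_0 lpoly"
  assumes p_low: "\<forall>e\<in>Poly_Mapping.keys p. a \<le> Poly_Mapping.lookup e i"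
    and q_low: "\<forall>e\<in>Poly_Mapping.keys q. b \<le> Poly_Mapping.lookup e i"
  shows "x_slice i (a + b) (p * q) = x_slice i a p * x_slice i b q"
proof -
  let ?P0 = "x_slice i a p" and ?P1 = "restrict_keys (\<lambda>e. a < Poly_Mapping.lookup e i) p"
  let ?Q0 = "x_slice i b q" and ?Q1 = "restrict_keys (\<lambda>e. b < Poly_Mapping.lookup e i) q"
  have "p * q = ?P0 * q + ?P1 * q"
    by (subst x_slice_split[OF p_low]) (rule distrib_right)
  moreover have "?P0 * q = ?P0 * ?Q0 + ?P0 * ?Q1"
    by (subst x_slice_split[OF q_low]) (rule distrib_left)
  ultimately have pq_split: "p * q = ?P0 * ?Q0 + ?P0 * ?Q1 + ?P1 * q"
    by simp
  have lowest: "\<forall>e\<in>Poly_Mapping.keys (?P0 * ?Q0). Poly_Mapping.lookup e i = a + b"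
    by (auto elim!: keys_mult_lookupE[where i = i] simp: keys_restrict_keys)
  have higher1: "\<forall>e\<in>Poly_Mapping.keys (?P0 * ?Q1). Poly_Mapping.lookup e i \<noteq> a + b"
    by (auto elim!: keys_mult_lookupE[where i = i] simp: keys_restrict_keys)
  have higher2: "\<forall>e\<in>Poly_Mapping.keys (?P1 * q). Poly_Mapping.lookup e i \<noteq> a + b"
    using q_low by (fastforce elim!: keys_mult_lookupE[where i = i] simp: keys_restrict_keys)
  show ?thesis
    unfolding pq_split restrict_keys_add restrict_keys_eq_self[OF lowest]
      restrict_keys_eq_zero[OF higher1] restrict_keys_eq_zero[OF higher2] by simp
qed

definition in_ideal :: "nat \<Rightarrow> (nat \<Rightarrow> 'a::comm_ring_1) \<Rightarrow> 'a \<Rightarrow> bool" where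
  "in_ideal m r x \<longleftrightarrow> (\<exists>a. x = (\<Sum>i=1..m. a i * r i))"

lemma in_ideal_zero: "in_ideal m r 0"
  unfolding in_ideal_def by (rule exI[of _ "\<lambda>i. 0"]) simp

lemma in_ideal_add: "in_ideal m r x \<Longrightarrow> in_ideal m r y \<Longrightarrow> in_ideal m r (x + y)"
  unfolding in_ideal_def
  by (elim exE, rule_tac x = "\<lambda>i. a i + aa i" in exI) (simp add: sum.distrib distrib_right)

lemma in_ideal_diff: "in_ideal m r x \<Longrightarrow> in_ideal m r y \<Longrightarrow> in_ideal m r (x - y)"
  unfolding in_ideal_def
  by (elim exE, rule_tac x = "\<lambda>i. a i - aa i" in exI) (simp add: sum_subtractf left_diff_distrib)

lemma in_ideal_mult_right: "in_ideal m r x \<Longrightarrow> in_ideal m r (x * y)"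
  unfolding in_ideal_def
  by (elim exE, rule_tac x = "\<lambda>i. a i * y" in exI) (simp add: sum_distrib_right, rule sum.cong, simp_all add: mult_ac)

lemma in_ideal_restrict_keys:
  fixes r :: "nat \<Rightarrow> ('b::comm_monoid_add \<Rightarrow>\<^sub>0 'a::comm_ring_1)"
  assumes "\<forall>j\<in>{1..m}. \<forall>v\<in>Poly_Mapping.keys (r j). \<forall>u. Q (u + v) = Q u"
    and "in_ideal m r x"
  shows "in_ideal m r (restrict_keys Q x)"
proof -
  obtain a where "x = (\<Sum>i=1..m. a i * r i)"
    using assms(2) by (auto simp: in_ideal_def)
  then have "restrict_keys Q x = (\<Sum>i=1..m. restrict_keys Q (a i) * r i)"
    using assms(1) by (simp add: restrict_keys_sum restrict_keys_mult_right)
  then show ?thesis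
    unfolding in_ideal_def by (rule exI[of _ "\<lambda>i. restrict_keys Q (a i)"])
qed

lemma in_ideal_lowest_slice:
  fixes r :: "nat \<Rightarrow> 'a::comm_ring_1 lpoly"
  assumes r_free: "\<forall>j\<in>{1..m}. \<forall>v\<in>Poly_Mapping.keys (r j). Poly_Mapping.lookup v i = 0"
    and s_low: "\<forall>e\<in>Poly_Mapping.keys s. k \<le> Poly_Mapping.lookup e i"
    and s_slice: "x_slice i k s = Poly_Mapping.single E 1"
    and g_low: "\<forall>e\<in>Poly_Mapping.keys g. l \<le> Poly_Mapping.lookup e i"
    and gs: "in_ideal m r (g * s)"
  shows "in_ideal m r (x_slice i l g)"
proof -
  have "x_slice i (l + k) (g * s) = x_slice i l g * Poly_Mapping.single E 1"
    using x_slice_mult_lowest[OF g_low s_low] s_slice by simp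
  moreover have "in_ideal m r (x_slice i (l + k) (g * s))"
    using r_free gs by (intro in_ideal_restrict_keys) (simp_all add: lookup_add)
  ultimately have "in_ideal m r (x_slice i l g * Poly_Mapping.single E 1 * Poly_Mapping.single (- E) 1)"
    by (simp add: in_ideal_mult_right)
  then show ?thesis
    by (simp add: mult.assoc mult_single)
qed

lemma in_ideal_mult_cancel:
  fixes r :: "nat \<Rightarrow> 'a::comm_ring_1 lpoly"
  assumes r_free: "\<forall>j\<in>{1..m}. \<forall>v\<in>Poly_Mapping.keys (r j). Poly_Mapping.lookup v i = 0"
    and s_low: "\<forall>e\<in>Poly_Mapping.keys s. k \<le> Poly_Mapping.lookup e i"
    and s_slice: "x_slice i k s = Poly_Mapping.single E 1"
    and "in_ideal m r (g * s)"
  shows "in_ideal m r g"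
  using assms(4)
proof (induction "card (Poly_Mapping.keys g)" arbitrary: g rule: less_induct)
  case less
  show ?case
  proof (cases "g = 0")
    case True
    then show ?thesis by (simp add: in_ideal_zero)
  next
    case False
    define l where "l = Min ((\<lambda>e. Poly_Mapping.lookup e i) ` Poly_Mapping.keys g)"
    have g_low: "\<forall>e\<in>Poly_Mapping.keys g. l \<le> Poly_Mapping.lookup e i"
      by (simp add: l_def)
    have "l \<in> (\<lambda>e. Poly_Mapping.lookup e i) ` Poly_Mapping.keys g"
      unfolding l_def using False by (intro Min_in) auto
    then obtain e0 where e0: "e0 \<in> Poly_Mapping.keys g" "Poly_Mapping.lookup e0 i = l"
      by blast
    let ?G0 = "x_slice i l g" and ?G1 = "restrict_keys (\<lambda>e. l < Poly_Mapping.lookup e i) g"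
    have g_split: "g = ?G0 + ?G1"
      by (rule x_slice_split[OF g_low])
    have G0: "in_ideal m r ?G0"
      by (rule in_ideal_lowest_slice[OF r_free s_low s_slice g_low less.prems])
    have "in_ideal m r (g * s - ?G0 * s)"
      by (rule in_ideal_diff[OF less.prems in_ideal_mult_right[OF G0]])
    moreover have "g * s - ?G0 * s = ?G1 * s"
      by (subst g_split) (simp add: algebra_simps)
    ultimately have "in_ideal m r (?G1 * s)"
      by simp
    moreover have "card (Poly_Mapping.keys ?G1) < card (Poly_Mapping.keys g)"
      using e0 by (intro psubset_card_mono) (auto simp: keys_restrict_keys)
    ultimately have "in_ideal m r ?G1"
      using less.hyps by blast
    then show ?thesis
      by (subst g_split) (rule in_ideal_add[OF G0])
  qed
qed

lemma x_slice_eq_xcoeff: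
  "x_slice i k p = xcoeff i p k * lmonom 1 (Poly_Mapping.single i k)"
proof -
  have "xcoeff i p k * lmonom 1 (Poly_Mapping.single i k)
      = (\<Sum>e\<in>{e\<in>Poly_Mapping.keys p. Poly_Mapping.lookup e i = k}.
          Poly_Mapping.single e (Poly_Mapping.lookup p e))"
    unfolding xcoeff_def lmonom_def sum_distrib_right by (simp add: mult_single)
  also have "\<dots> = x_slice i k p"
    by (rule poly_mapping_eqI)
       (auto simp: lookup_sum lookup_single when_def in_keys_iff sum.delta)
  finally show ?thesis ..
qed

lemma divisor_wrt_lowest_slice:
  assumes "divisor_wrt i s"
  obtains k E where "\<forall>e\<in>Poly_Mapping.keys s. k \<le> Poly_Mapping.lookup e i"
    and "x_slice i k s = Poly_Mapping.single E 1"
proof -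
  obtain k e0 where lower: "\<forall>j<k. xcoeff i s j = 0" and lowest: "xcoeff i s k = lmonom 1 e0"
    using assms by (auto simp: divisor_wrt_def)
  have "\<forall>e\<in>Poly_Mapping.keys s. k \<le> Poly_Mapping.lookup e i"
  proof
    fix e assume e: "e \<in> Poly_Mapping.keys s"
    show "k \<le> Poly_Mapping.lookup e i"
    proof (rule ccontr)
      assume "\<not> k \<le> Poly_Mapping.lookup e i"
      then have "x_slice i (Poly_Mapping.lookup e i) s = 0"
        using lower by (simp add: x_slice_eq_xcoeff)
      then have "Poly_Mapping.lookup (x_slice i (Poly_Mapping.lookup e i) s) e = 0"
        by simp
      with e show False
        by (simp add: in_keys_iff)
    qed
  qed
  moreover have "x_slice i k s = Poly_Mapping.single (e0 + Poly_Mapping.single i k) 1"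
    by (simp add: x_slice_eq_xcoeff lowest lmonom_def mult_single)
  ultimately show thesis
    by (rule that)
qed

definition koszul_component ::
  "nat \<Rightarrow> (nat \<Rightarrow> 'a::comm_ring_1) \<Rightarrow> (nat \<Rightarrow> nat \<Rightarrow> 'a) \<Rightarrow> nat \<Rightarrow> 'a" where
  "koszul_component n r c k = (\<Sum>j\<in>{1..n}-{k}. c k j * r j) - (\<Sum>i\<in>{1..n}-{k}. c i k * r i)"

lemma koszul_component_extend:
  fixes r g :: "nat \<Rightarrow> 'a::comm_ring_1" and c' :: "nat \<Rightarrow> nat \<Rightarrow> 'a" and m :: nat
  defines "c \<equiv> \<lambda>i j. if i = Suc m then (if j \<le> m then g j else 0)
                     else if j = Suc m then 0 else c' i j"
  shows koszul_component_extend_last: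
      "koszul_component (Suc m) r c (Suc m) = (\<Sum>j=1..m. g j * r j)"
    and koszul_component_extend_old:
      "k \<in> {1..m} \<Longrightarrow> koszul_component (Suc m) r c k = koszul_component m r c' k - g k * r (Suc m)"
proof -
  have "{1..Suc m} - {Suc m} = {1..m}"
    by auto
  then show "koszul_component (Suc m) r c (Suc m) = (\<Sum>j=1..m. g j * r j)"
    unfolding koszul_component_def c_def by simp
next
  assume k: "k \<in> {1..m}"
  then have "{1..Suc m} - {k} = insert (Suc m) ({1..m} - {k})"
    by auto
  moreover have "(\<Sum>j\<in>{1..m}-{k}. c k j * r j) = (\<Sum>j\<in>{1..m}-{k}. c' k j * r j)"
    and "(\<Sum>i\<in>{1..m}-{k}. c i k * r i) = (\<Sum>i\<in>{1..m}-{k}. c' i k * r i)"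
    using k by (auto simp: c_def intro!: sum.cong)
  ultimately show "koszul_component (Suc m) r c k = koszul_component m r c' k - g k * r (Suc m)"
    using k unfolding koszul_component_def by (simp add: c_def algebra_simps)
qed

lemma lpoly_in_lookup_eq_0:
  assumes "lpoly_in j p" "e \<in> Poly_Mapping.keys p" "j < l"
  shows "Poly_Mapping.lookup e l = 0"
proof (rule ccontr)
  assume "Poly_Mapping.lookup e l \<noteq> 0"
  then have "l \<in> Poly_Mapping.keys e"
    by (simp add: in_keys_iff)
  moreover have "\<forall>j'\<in>Poly_Mapping.keys e. j' \<le> j"
    using assms(1,2) by (auto simp: lpoly_in_def)
  ultimately show False
    using assms(3) by fastforce
qed

lemma flat_syzygy_koszul:
  fixes r f :: "nat \<Rightarrow> 'a::comm_ring_1 lpoly"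
  assumes "flat n r" and "(\<Sum>i=1..n. f i * r i) = 0"
  shows "\<exists>c. \<forall>k\<in>{1..n}. f k = koszul_component n r c k"
  using assms
proof (induction n arbitrary: f)
  case 0
  then show ?case by simp
next
  case (Suc m)
  let ?s = "r (Suc m)"
  have flat_m: "flat m r"
    using Suc.prems(1) by (simp add: flat_def)
  have "divisor_wrt (Suc m) ?s"
    using Suc.prems(1) by (simp add: flat_def)
  then obtain k E where s_low: "\<forall>e\<in>Poly_Mapping.keys ?s. k \<le> Poly_Mapping.lookup e (Suc m)"
    and s_slice: "x_slice (Suc m) k ?s = Poly_Mapping.single E 1"
    by (rule divisor_wrt_lowest_slice)
  have r_free: "\<forall>j\<in>{1..m}. \<forall>v\<in>Poly_Mapping.keys (r j). Poly_Mapping.lookup v (Suc m) = 0"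
  proof (intro ballI)
    fix j v assume j: "j \<in> {1..m}" and v: "v \<in> Poly_Mapping.keys (r j)"
    have "lpoly_in j (r j)"
      using Suc.prems(1) j by (simp add: flat_def)
    then show "Poly_Mapping.lookup v (Suc m) = 0"
      using v j by (intro lpoly_in_lookup_eq_0) auto
  qed
  have "f (Suc m) * ?s = (\<Sum>i=1..m. (- f i) * r i)"
    using Suc.prems(2) by (simp add: sum_negf eq_neg_iff_add_eq_0 add.commute)
  then have "in_ideal m r (f (Suc m) * ?s)"
    unfolding in_ideal_def by (rule exI[of _ "\<lambda>i. - f i"])
  then obtain g where g: "f (Suc m) = (\<Sum>j=1..m. g j * r j)"
    using in_ideal_mult_cancel[OF r_free s_low s_slice] by (auto simp: in_ideal_def)
  have "(\<Sum>i=1..m. (f i + g i * ?s) * r i) = (\<Sum>i=1..m. f i * r i) + f (Suc m) * ?s"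
    unfolding g distrib_right sum.distrib sum_distrib_right by (simp add: mult_ac)
  also have "\<dots> = 0"
    using Suc.prems(2) by simp
  finally obtain c' where c': "\<forall>k\<in>{1..m}. f k + g k * ?s = koszul_component m r c' k"
    using Suc.IH[OF flat_m, of "\<lambda>i. f i + g i * ?s"] by blast
  define c where "c = (\<lambda>i j. if i = Suc m then (if j \<le> m then g j else 0)
                               else if j = Suc m then 0 else c' i j)"
  have "f k = koszul_component (Suc m) r c k" if k: "k \<in> {1..Suc m}" for k
  proof (cases "k = Suc m")
    case True
    then show ?thesis
      using g unfolding c_def by (simp add: koszul_component_extend_last)
  next
    case False
    then have k_old: "k \<in> {1..m}"
      using k by auto
    then have "f k = koszul_component m r c' k - g k * ?s"
      using c' by (simp add: eq_diff_eq)
    then show ?thesis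
      using k_old unfolding c_def by (simp add: koszul_component_extend_old)
  qed
  then show ?case
    by blast
qed

lemma restrict_keys_koszul_component:
  fixes r :: "nat \<Rightarrow> ('b::comm_monoid_add \<Rightarrow>\<^sub>0 'a::comm_ring_1)"
  assumes "\<forall>j\<in>{1..n}. \<forall>v\<in>Poly_Mapping.keys (r j). \<forall>u. Q (u + v) = Q u"
  shows "restrict_keys Q (koszul_component n r c k)
      = koszul_component n r (\<lambda>i j. restrict_keys Q (c i j)) k"
proof -
  have restrict_mult: "restrict_keys Q (a * r j) = restrict_keys Q a * r j" if "j \<in> {1..n}" for a j
    using assms that by (intro restrict_keys_mult_right) blast
  show ?thesis
    unfolding koszul_component_def restrict_keys_diff restrict_keys_sum
    by (intro arg_cong2[where f = minus] sum.cong refl) (simp_all add: restrict_mult)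
qed

definition exponent_in :: "nat \<Rightarrow> (nat \<Rightarrow>\<^sub>0 int) \<Rightarrow> bool" where
  "exponent_in n e \<longleftrightarrow> (\<forall>j\<in>Poly_Mapping.keys e. 1 \<le> j \<and> j \<le> n)"

lemma exponent_in_iff: "exponent_in n e \<longleftrightarrow> (\<forall>j. \<not> (1 \<le> j \<and> j \<le> n) \<longrightarrow> Poly_Mapping.lookup e j = 0)"
  by (auto simp: exponent_in_def in_keys_iff)

lemma exponent_in_add_right: "exponent_in n v \<Longrightarrow> exponent_in n (u + v) \<longleftrightarrow> exponent_in n u"
  by (simp add: exponent_in_iff lookup_add)

lemma lpoly_in_iff_exponent_in: "lpoly_in n p \<longleftrightarrow> (\<forall>e\<in>Poly_Mapping.keys p. exponent_in n e)"
  by (simp add: lpoly_in_def exponent_in_def)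

lemma flat_exponent_in:
  assumes "flat n r" "j \<in> {1..n}" "v \<in> Poly_Mapping.keys (r j)"
  shows "exponent_in n v"
proof -
  have "lpoly_in j (r j)"
    using assms(1,2) by (simp add: flat_def)
  then have "exponent_in j v"
    using assms(3) by (simp add: lpoly_in_iff_exponent_in)
  then show ?thesis
    using assms(2) by (auto simp: exponent_in_def)
qed

lemma trivial_syzygy_if_koszul:
  assumes r_in: "\<forall>j\<in>{1..n}. \<forall>v\<in>Poly_Mapping.keys (r j). exponent_in n v"
    and f_in: "\<forall>k\<in>{1..n}. lpoly_in n (f k)"
    and c: "\<forall>k\<in>{1..n}. f k = koszul_component n r c k"
  shows "trivial_syzygy n r f"
proof -
  have r_shift: "\<forall>j\<in>{1..n}. \<forall>v\<in>Poly_Mapping.keys (r j). \<forall>u. exponent_in n (u + v) = exponent_in n u"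
    using r_in exponent_in_add_right by blast
  let ?c = "\<lambda>i j. restrict_keys (exponent_in n) (c i j)"
  have "f k = koszul_component n r ?c k" if "k \<in> {1..n}" for k
  proof -
    have "f k = restrict_keys (exponent_in n) (f k)"
      using f_in that by (intro restrict_keys_eq_self[symmetric]) (simp add: lpoly_in_iff_exponent_in)
    also have "\<dots> = restrict_keys (exponent_in n) (koszul_component n r c k)"
      using c that by simp
    also have "\<dots> = koszul_component n r ?c k"
      by (rule restrict_keys_koszul_component[OF r_shift])
    finally show ?thesis .
  qed
  moreover have "lpoly_in n (?c i j)" for i j
    by (simp add: lpoly_in_iff_exponent_in keys_restrict_keys)
  ultimately show ?thesis
    unfolding trivial_syzygy_def koszul_component_def by (intro exI[of _ ?c]) blast
qed

theorem lemma2p8: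
  fixes r f :: "nat \<Rightarrow> ('a::comm_ring_1) lpoly" and n :: nat
  assumes R_quot_Z: "surj (of_int :: int \<Rightarrow> 'a)"
    and R_nontriv: "(0::'a) \<noteq> 1"
    and "flat n r"
    and "syzygy n r f"
  shows "trivial_syzygy n r f"
proof -
  have f_in: "\<forall>k\<in>{1..n}. lpoly_in n (f k)" and "(\<Sum>i=1..n. f i * r i) = 0"
    using assms(4) by (auto simp: syzygy_def)
  then obtain c where "\<forall>k\<in>{1..n}. f k = koszul_component n r c k"
    using flat_syzygy_koszul[OF assms(3)] by blast
  moreover have "\<forall>j\<in>{1..n}. \<forall>v\<in>Poly_Mapping.keys (r j). exponent_in n v"
    using flat_exponent_in[OF assms(3)] by blast
  ultimately show ?thesis
    using f_in by (intro trivial_syzygy_if_koszul)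
qed

end
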